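(* For every $n\in\mathbb N$, $\mathrm{Ind}_{\mathrm B}(\ell_\infty(n):\mathbb C1_n)=n$, where $1_n=(1,\dots,1)\in\ell_\infty(n)$.
   Context: $\ell_\infty(n)$ is $\mathbb C^n$ with the sup norm. For a closed subspace $X_0$ of a Banach space $X$, the bounded index is $\mathrm{Ind}_{\mathrm B}(X:X_0)=\inf\{\|T\|:T\in\mathcal L(X,X_0),\ \|T-\mathrm{id}_X\|\le\|T\|-1\}$, where $\mathcal L(X,X_0)$ denotes bounded linear maps $X\to X_0$ (regarded as maps into $X$); equivalently $\mathrm{Ind}_{\mathrm B}(X:X_0)^{-1}=\sup\{\lambda\ge0:\exists T\in\mathcal L(X,X_0),\ \|T\|=1,\ \|T-\lambda\,\mathrm{id}_X\|\le1-\lambda\}$. *)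

theory Defs
  imports "HOL-Analysis.Analysis"
begin

text \<open>ell_infinity(n): functions from a finite index type 'n (with CARD('n) = n) to complex,
  equipped with the sup norm.\<close>

definition supnorm :: "('n::finite \<Rightarrow> complex) \<Rightarrow> real" where
  "supnorm x = Max (range (\<lambda>i. cmod (x i)))"

definition bounded_clinear_map :: "(('n::finite \<Rightarrow> complex) \<Rightarrow> ('n \<Rightarrow> complex)) \<Rightarrow> bool" where
  "bounded_clinear_map T \<longleftrightarrow>
     (\<forall>x y. T (\<lambda>i. x i + y i) = (\<lambda>i. T x i + T y i)) \<and>
     (\<forall>c x. T (\<lambda>i. c * x i) = (\<lambda>i. c * T x i)) \<and>
     (\<exists>K. \<forall>x. supnorm (T x) \<le> K * supnorm x)"

definition opnorm :: "(('n::finite \<Rightarrow> complex) \<Rightarrow> ('n \<Rightarrow> complex)) \<Rightarrow> real" where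
  "opnorm T = Sup ((\<lambda>x. supnorm (T x)) ` {x. supnorm x \<le> 1})"

definition bounded_index :: "('n::finite \<Rightarrow> complex) set \<Rightarrow> real" where
  "bounded_index X0 = Inf {opnorm T | T. bounded_clinear_map T \<and> range T \<subseteq> X0 \<and>
       opnorm (\<lambda>x i. T x i - x i) \<le> opnorm T - 1}"

end

theory Submission
  imports Defs
begin

text \<open>A map into \<open>\<complex>1\<^sub>n\<close> has the form \<open>x \<mapsto> (\<Sum>\<^sub>j a\<^sub>j x\<^sub>j) 1\<^sub>n\<close>, with norm
  \<open>A = \<Sum>\<^sub>j \<bar>a\<^sub>j\<bar>\<close>; testing \<open>T - id\<close> at coordinate \<open>i\<close> on a vector of suitable
  unimodular phases gives \<open>\<parallel>T - id\<parallel> \<ge> A - \<bar>a\<^sub>i\<bar> + \<bar>a\<^sub>i - 1\<bar>\<close>. So the defining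
  condition \<open>\<parallel>T - id\<parallel> \<le> \<parallel>T\<parallel> - 1\<close> forces \<open>\<bar>a\<^sub>i\<bar> \<ge> 1\<close> for every \<open>i\<close>, whence
  \<open>\<parallel>T\<parallel> \<ge> n\<close>. Equality is attained by \<open>a = 1\<^sub>n\<close>, for which \<open>\<parallel>T - id\<parallel> = n - 1\<close>.\<close>

lemma norm_le_supnorm: "cmod (x i) \<le> supnorm x"
  unfolding supnorm_def by (rule Max_ge) auto

lemma supnorm_leI: "(\<And>i. cmod (x i) \<le> c) \<Longrightarrow> supnorm x \<le> c"
  unfolding supnorm_def by (subst Max_le_iff) auto

lemma supnorm_le_opnorm:
  assumes "\<And>x. supnorm (F x) \<le> K * supnorm x" "0 \<le> K" "supnorm x \<le> 1"
  shows "supnorm (F x) \<le> opnorm F"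
  unfolding opnorm_def
proof (rule cSup_upper)
  show "supnorm (F x) \<in> (\<lambda>x. supnorm (F x)) ` {x. supnorm x \<le> 1}"
    using assms(3) by auto
  have "supnorm (F y) \<le> K" if "supnorm y \<le> 1" for y
    using assms(1)[of y] mult_left_mono[OF that assms(2)] by simp
  then show "bdd_above ((\<lambda>x. supnorm (F x)) ` {x. supnorm x \<le> 1})"
    by (intro bdd_aboveI2) auto
qed

lemma opnorm_leI:
  assumes "\<And>x. supnorm x \<le> 1 \<Longrightarrow> supnorm (F x) \<le> c"
  shows "opnorm F \<le> c"
  unfolding opnorm_def
proof (rule cSup_least)
  have "supnorm (\<lambda>i::'a. 0::complex) \<le> 1"
    by (rule supnorm_leI) auto
  then show "(\<lambda>x. supnorm (F x)) ` {x. supnorm x \<le> 1} \<noteq> {}"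
    by blast
qed (use assms in auto)

lemma opnorm_le_bound:
  assumes "\<And>x. supnorm (F x) \<le> K * supnorm x" "0 \<le> K"
  shows "opnorm F \<le> K"
proof (rule opnorm_leI)
  fix x :: "'a \<Rightarrow> complex"
  assume "supnorm x \<le> 1"
  then show "supnorm (F x) \<le> K"
    using assms(1)[of x] mult_left_mono[of _ 1 K] assms(2) by fastforce
qed

definition const_functional ::
    "('n::finite \<Rightarrow> complex) \<Rightarrow> ('n \<Rightarrow> complex) \<Rightarrow> ('n \<Rightarrow> complex)" where
  "const_functional a x = (\<lambda>i. \<Sum>j\<in>UNIV. x j * a j)"

lemma bounded_clinear_map_sum:
  assumes "bounded_clinear_map T" "finite S"
  shows "T (\<lambda>k. \<Sum>j\<in>S. x j * (if k = j then 1 else 0))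
           = (\<lambda>k. \<Sum>j\<in>S. x j * T (\<lambda>k. if k = j then 1 else 0) k)"
proof -
  have add: "\<And>x y. T (\<lambda>i. x i + y i) = (\<lambda>i. T x i + T y i)"
    and hom: "\<And>c x. T (\<lambda>i. c * x i) = (\<lambda>i. c * T x i)"
    using assms(1) unfolding bounded_clinear_map_def by blast+
  from assms(2) show ?thesis
  proof (induction S rule: finite_induct)
    case empty
    show ?case using hom[of 0 "\<lambda>i. 0"] by simp
  next
    case (insert a S)
    then show ?case
      using add[of "\<lambda>k. x a * (if k = a then 1 else 0)"] by (simp add: hom)
  qed
qed

lemma bounded_clinear_map_expansion:
  assumes "bounded_clinear_map (T :: ('n::finite \<Rightarrow> complex) \<Rightarrow> _)"
  shows "T x = (\<lambda>k. \<Sum>j\<in>UNIV. x j * T (\<lambda>k. if k = j then 1 else 0) k)"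
proof -
  have "x = (\<lambda>k. \<Sum>j\<in>UNIV. x j * (if k = j then 1 else 0))"
    by (simp add: if_distrib cong: if_cong)
  then show ?thesis
    using bounded_clinear_map_sum[OF assms, of UNIV x] by simp
qed

lemma constant_valued_map_eq_const_functional:
  fixes T :: "('n::finite \<Rightarrow> complex) \<Rightarrow> ('n \<Rightarrow> complex)"
  assumes "bounded_clinear_map T" and "range T \<subseteq> range (\<lambda>c. (\<lambda>i. c))"
  shows "T = const_functional (\<lambda>j. T (\<lambda>k. if k = j then 1 else 0) undefined)"
proof -
  have const: "T y k = T y undefined" for y k
  proof -
    obtain c where "T y = (\<lambda>i. c)"
      using assms(2) by blast
    then show ?thesis by simp
  qed
  show ?thesis
  proof (intro ext)
    fix x k
    have "T x k = (\<Sum>j\<in>UNIV. x j * T (\<lambda>k. if k = j then 1 else 0) k)"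
      using fun_cong[OF bounded_clinear_map_expansion[OF assms(1), of x], of k] by simp
    also have "\<dots> = (\<Sum>j\<in>UNIV. x j * T (\<lambda>k. if k = j then 1 else 0) undefined)"
      using const by (intro sum.cong) auto
    finally show "T x k = const_functional (\<lambda>j. T (\<lambda>k. if k = j then 1 else 0) undefined) x k"
      by (simp add: const_functional_def)
  qed
qed

lemma supnorm_const_functional_le:
  "supnorm (const_functional a x) \<le> (\<Sum>j\<in>UNIV. cmod (a j)) * supnorm x"
proof (rule supnorm_leI)
  fix k
  have "cmod (const_functional a x k) \<le> (\<Sum>j\<in>UNIV. cmod (x j) * cmod (a j))"
    unfolding const_functional_def by (rule order_trans[OF norm_sum]) (simp add: norm_mult)
  also have "\<dots> \<le> (\<Sum>j\<in>UNIV. supnorm x * cmod (a j))"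
    by (intro sum_mono mult_right_mono norm_le_supnorm) auto
  finally show "cmod (const_functional a x k) \<le> (\<Sum>j\<in>UNIV. cmod (a j)) * supnorm x"
    by (simp add: sum_distrib_left mult.commute)
qed

lemma bounded_clinear_map_const_functional: "bounded_clinear_map (const_functional a)"
  unfolding bounded_clinear_map_def
proof (intro conjI allI exI)
  show "supnorm (const_functional a x) \<le> (\<Sum>j\<in>UNIV. cmod (a j)) * supnorm x" for x
    by (rule supnorm_const_functional_le)
qed (simp_all add: const_functional_def sum.distrib sum_distrib_left algebra_simps)

lemma range_const_functional: "range (const_functional a) \<subseteq> range (\<lambda>c. (\<lambda>i. c))"
  unfolding const_functional_def by auto

lemma cnj_sgn_mult_self: "cnj (sgn z) * z = complex_of_real (cmod z)"
proof (cases "z = 0")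
  case False
  have "cnj (sgn z) * z = (cnj z * z) / complex_of_real (cmod z)"
    by (simp add: sgn_div_norm divide_complex_def scaleR_conv_of_real)
  also have "cnj z * z = complex_of_real (cmod z) ^ 2"
    using complex_norm_square[of z] by (simp add: mult.commute)
  finally show ?thesis
    using False by (simp add: power2_eq_square)
qed simp

lemma supnorm_cnj_sgn_le_1: "supnorm (\<lambda>j. cnj (sgn (z j))) \<le> 1"
  by (rule supnorm_leI) (simp add: norm_sgn)

lemma const_functional_minus_id_eq:
  "const_functional a x i - x i = (\<Sum>j\<in>UNIV-{i}. x j * a j) + x i * (a i - 1)"
  unfolding const_functional_def by (simp add: sum.remove[of UNIV i] algebra_simps)

lemma norm_const_functional_minus_id_le:
  "cmod (const_functional a x i - x i)
     \<le> ((\<Sum>j\<in>UNIV. cmod (a j)) - cmod (a i) + cmod (a i - 1)) * supnorm x"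
proof -
  have "cmod (const_functional a x i - x i)
          \<le> (\<Sum>j\<in>UNIV-{i}. cmod (x j) * cmod (a j)) + cmod (x i) * cmod (a i - 1)"
    unfolding const_functional_minus_id_eq
    by (rule order_trans[OF norm_triangle_ineq]) (auto intro: order_trans[OF norm_sum] simp: norm_mult)
  also have "\<dots> \<le> (\<Sum>j\<in>UNIV-{i}. supnorm x * cmod (a j)) + supnorm x * cmod (a i - 1)"
    by (intro add_mono sum_mono mult_right_mono norm_le_supnorm) auto
  also have "(\<Sum>j\<in>UNIV-{i}. cmod (a j)) = (\<Sum>j\<in>UNIV. cmod (a j)) - cmod (a i)"
    by (simp add: sum.remove[of UNIV i])
  ultimately show ?thesis
    by (simp add: sum_distrib_left[symmetric] algebra_simps)
qed

lemma supnorm_const_functional_minus_id_le: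
  "supnorm (\<lambda>i. const_functional a x i - x i) \<le> ((\<Sum>j\<in>UNIV. cmod (a j)) + 1) * supnorm x"
proof (rule supnorm_leI)
  fix i
  have "cmod (a i - 1) \<le> cmod (a i) + 1"
    using norm_triangle_ineq4[of "a i" 1] by simp
  then have "(\<Sum>j\<in>UNIV. cmod (a j)) - cmod (a i) + cmod (a i - 1) \<le> (\<Sum>j\<in>UNIV. cmod (a j)) + 1"
    by linarith
  then show "cmod (const_functional a x i - x i) \<le> ((\<Sum>j\<in>UNIV. cmod (a j)) + 1) * supnorm x"
    by (rule order_trans[OF norm_const_functional_minus_id_le mult_right_mono])
      (rule order_trans[OF norm_ge_zero norm_le_supnorm])
qed

lemma opnorm_const_functional: "opnorm (const_functional a) = (\<Sum>j\<in>UNIV. cmod (a j))"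
proof (rule antisym)
  let ?A = "\<Sum>j\<in>UNIV. cmod (a j)"
  show "opnorm (const_functional a) \<le> ?A"
    by (rule opnorm_le_bound[OF supnorm_const_functional_le]) (simp add: sum_nonneg)
  have "const_functional a (\<lambda>j. cnj (sgn (a j))) i = complex_of_real ?A" for i
    by (simp add: const_functional_def cnj_sgn_mult_self)
  then have "cmod (const_functional a (\<lambda>j. cnj (sgn (a j))) i) = ?A" for i
    by (simp only: norm_of_real) (simp add: sum_nonneg)
  then have "?A \<le> supnorm (const_functional a (\<lambda>j. cnj (sgn (a j))))"
    by (metis norm_le_supnorm)
  also have "\<dots> \<le> opnorm (const_functional a)"
    by (rule supnorm_le_opnorm[OF supnorm_const_functional_le _ supnorm_cnj_sgn_le_1])
      (simp add: sum_nonneg)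
  finally show "?A \<le> opnorm (const_functional a)" .
qed

lemma opnorm_const_functional_minus_id_ge:
  "(\<Sum>j\<in>UNIV. cmod (a j)) - cmod (a i) + cmod (a i - 1)
     \<le> opnorm (\<lambda>x i. const_functional a x i - x i)"
proof -
  let ?A = "\<Sum>j\<in>UNIV. cmod (a j)"
  define y where "y j = (if j = i then cnj (sgn (a i - 1)) else cnj (sgn (a j)))" for j
  have "(\<Sum>j\<in>UNIV-{i}. y j * a j) = (\<Sum>j\<in>UNIV-{i}. complex_of_real (cmod (a j)))"
    by (intro sum.cong) (auto simp: y_def cnj_sgn_mult_self)
  also have "\<dots> = complex_of_real (?A - cmod (a i))"
    by (simp only: of_real_sum[symmetric] sum.remove[of UNIV i, simplified] finite)
      simp
  finally have "const_functional a y i - y i = complex_of_real (?A - cmod (a i) + cmod (a i - 1))"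
    unfolding const_functional_minus_id_eq by (simp add: y_def cnj_sgn_mult_self)
  moreover have "cmod (a i) \<le> ?A"
    by (rule member_le_sum) auto
  ultimately have "cmod (const_functional a y i - y i) = ?A - cmod (a i) + cmod (a i - 1)"
    by (simp only: norm_of_real) simp
  then have "?A - cmod (a i) + cmod (a i - 1) \<le> supnorm (\<lambda>i. const_functional a y i - y i)"
    using norm_le_supnorm[of "\<lambda>i. const_functional a y i - y i" i] by linarith
  also have "\<dots> \<le> opnorm (\<lambda>x i. const_functional a x i - x i)"
  proof (rule supnorm_le_opnorm[OF supnorm_const_functional_minus_id_le])
    show "0 \<le> ?A + 1"
      by (simp add: sum_nonneg)
    show "supnorm y \<le> 1"
      unfolding y_def by (rule supnorm_leI) (simp add: norm_sgn)
  qed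
  finally show ?thesis .
qed

lemma opnorm_const_functional_minus_id_le:
  assumes "\<And>i. (\<Sum>j\<in>UNIV. cmod (a j)) - cmod (a i) + cmod (a i - 1) \<le> c"
  shows "opnorm (\<lambda>x i. const_functional a x i - x i) \<le> c"
proof (intro opnorm_leI supnorm_leI)
  fix x :: "'a \<Rightarrow> complex" and i
  assume "supnorm x \<le> 1"
  have "cmod (a i) \<le> (\<Sum>j\<in>UNIV. cmod (a j))"
    by (rule member_le_sum) auto
  then have "((\<Sum>j\<in>UNIV. cmod (a j)) - cmod (a i) + cmod (a i - 1)) * supnorm x
               \<le> (\<Sum>j\<in>UNIV. cmod (a j)) - cmod (a i) + cmod (a i - 1)"
    using \<open>supnorm x \<le> 1\<close> mult_left_mono[of "supnorm x" 1] by simp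
  then show "cmod (const_functional a x i - x i) \<le> c"
    using norm_const_functional_minus_id_le[of a x i] assms[of i] by linarith
qed

lemma card_le_opnorm_of_constant_valued:
  fixes T :: "('n::finite \<Rightarrow> complex) \<Rightarrow> ('n \<Rightarrow> complex)"
  assumes "bounded_clinear_map T" and "range T \<subseteq> range (\<lambda>c. (\<lambda>i. c))"
    and "opnorm (\<lambda>x i. T x i - x i) \<le> opnorm T - 1"
  shows "real CARD('n) \<le> opnorm T"
proof -
  obtain a where T: "T = const_functional a"
    using constant_valued_map_eq_const_functional[OF assms(1,2)] by blast
  have "1 \<le> cmod (a i)" for i
    using opnorm_const_functional_minus_id_ge[of a i] assms(3) norm_ge_zero[of "a i - 1"]
    unfolding T opnorm_const_functional by linarith
  then have "(\<Sum>j\<in>(UNIV::'n set). 1) \<le> (\<Sum>j\<in>UNIV. cmod (a j))"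
    by (intro sum_mono)
  then show ?thesis
    by (simp add: T opnorm_const_functional)
qed

theorem mainTheorem19:
  shows "bounded_index (range (\<lambda>c::complex. (\<lambda>i::'n::finite. c))) = real CARD('n)"
proof -
  let ?ones = "const_functional (\<lambda>_::'n. 1)"
  have norm_ones: "opnorm ?ones = real CARD('n)"
    by (simp add: opnorm_const_functional)
  have "opnorm (\<lambda>x i. ?ones x i - x i) \<le> real CARD('n) - 1"
    by (rule opnorm_const_functional_minus_id_le) simp
  then have ones_admissible: "bounded_clinear_map ?ones \<and> range ?ones \<subseteq> range (\<lambda>c. (\<lambda>i. c))
      \<and> opnorm (\<lambda>x i. ?ones x i - x i) \<le> opnorm ?ones - 1"
    by (intro conjI bounded_clinear_map_const_functional range_const_functional) (simp add: norm_ones)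
  show ?thesis
    unfolding bounded_index_def
  proof (rule cInf_eq_minimum)
    show "real CARD('n) \<in> {opnorm T |T. bounded_clinear_map T \<and> range T \<subseteq> range (\<lambda>c. (\<lambda>i::'n. c))
       \<and> opnorm (\<lambda>x i. T x i - x i) \<le> opnorm T - 1}"
      by (intro CollectI exI[where x = ?ones] conjI[OF norm_ones[symmetric] ones_admissible])
  qed (use card_le_opnorm_of_constant_valued in blast)
qed

end
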